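(* Let $p$ be the POP of length 4 defined by the relations $1>2$ and $4>3$; equivalently, avoiding $p$ means simultaneously avoiding the patterns $2134, 3124, 4123, 3214, 4213, 4312$. Let $a(n)=|S_n(p)|$. Then $a(0)=1$, and for $n\geq 1$, $a(n)=2a(n-1)+2^{n-1}-2$, so that $a(n)=(n-2)2^{n-1}+2$ for $n\geq 1$. Moreover, $$\sum_{n\geq 0}a(n)x^n=\frac{1-4x+5x^2}{(1-x)(1-2x)^2}.$$
   Context: An $n$-permutation is a word $\pi=\pi_1\cdots\pi_n$ containing each of $1,\ldots,n$ exactly once; $S_n$ is the set of $n$-permutations ($S_0$ consists of the empty permutation). A partially ordered pattern (POP) $p$ of length $k$ is a partial order on the label set $\{1,\ldots,k\}$; it is described by a set of generating relations, where a relation $x>y$ means that in an occurrence the entry in the $x$-th chosen position must be larger than the entry in the $y$-th chosen position, and labels not involved in any relation are unconstrained. An $n$-permutation $\pi$ contains $p$ if there are indices $1\leq i_1<\cdots<i_k\leq n$ such that $\pi_{i_x}>\pi_{i_y}$ whenever $x>y$ in the partial order; otherwise $\pi$ avoids $p$. $S_n(p)$ denotes the set of $n$-permutations avoiding $p$. A permutation $\pi$ avoids a classical pattern $q$ if it has no subsequence order-isomorphic to $q$. *)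

theory Defs
  imports "HOL-Computational_Algebra.Formal_Power_Series"
begin

definition perms :: "nat \<Rightarrow> nat list set" where
  "perms n = {\<pi>. distinct \<pi> \<and> set \<pi> = {1..n}}"

text \<open>A POP of length k given by a set R of generating relations (x,y) meaning x > y,
  labels in {1..k}. Positions in the word are 0-indexed.\<close>
definition contains_pop :: "nat \<Rightarrow> (nat \<times> nat) set \<Rightarrow> nat list \<Rightarrow> bool" where
  "contains_pop k R \<pi> \<longleftrightarrow>
     (\<exists>i::nat \<Rightarrow> nat.
        (\<forall>x\<in>{1..k}. \<forall>y\<in>{1..k}. x < y \<longrightarrow> i x < i y) \<and>
        (\<forall>x\<in>{1..k}. i x < length \<pi>) \<and>
        (\<forall>(x, y)\<in>R. \<pi> ! (i x) > \<pi> ! (i y)))"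

definition avoids_pop :: "nat \<Rightarrow> (nat \<times> nat) set \<Rightarrow> nat list \<Rightarrow> bool" where
  "avoids_pop k R \<pi> \<longleftrightarrow> \<not> contains_pop k R \<pi>"

definition contains_classical :: "nat list \<Rightarrow> nat list \<Rightarrow> bool" where
  "contains_classical q \<pi> \<longleftrightarrow>
     (\<exists>i::nat \<Rightarrow> nat.
        (\<forall>a<length q. \<forall>b<length q. a < b \<longrightarrow> i a < i b) \<and>
        (\<forall>a<length q. i a < length \<pi>) \<and>
        (\<forall>a<length q. \<forall>b<length q. q ! a < q ! b \<longleftrightarrow> \<pi> ! (i a) < \<pi> ! (i b)))"

definition avoids_classical :: "nat list \<Rightarrow> nat list \<Rightarrow> bool" where
  "avoids_classical q \<pi> \<longleftrightarrow> \<not> contains_classical q \<pi>"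

definition pop_p :: "(nat \<times> nat) set" where
  "pop_p = {(1, 2), (4, 3)}"

definition a_seq :: "nat \<Rightarrow> nat" where
  "a_seq n = card {\<pi> \<in> perms n. avoids_pop 4 pop_p \<pi>}"

end

theory Submission
  imports Defs
begin

text \<open>
  Avoiding the POP means having no (not necessarily adjacent) descent followed further
  right by an ascent.  Look at the position of the minimum letter m.  If m comes first or
  last, deleting it leaves an arbitrary avoider on the remaining letters.  If m is
  interior, every letter before it exceeds it, so a descent left of m followed by m and
  any later letter is forbidden, and symmetrically for an ascent right of m: the prefix
  must increase and the suffix must decrease.  Such a word is determined by the set of
  letters left of m, a proper nonempty subset of the other letters.  Hence
  a(n) = 2 a(n-1) + 2^(n-1) - 2, which gives the closed form and the rational generating
  function.
\<close>

lemma fps_closed_form: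
  fixes a :: "nat \<Rightarrow> rat"
  assumes a0: "a 0 = 1" and a: "\<And>n. n \<ge> 1 \<Longrightarrow> a n = (of_nat n - 2) * 2 ^ (n - 1) + 2"
  shows "Abs_fps a = (1 - 4 * fps_X + 5 * fps_X ^ 2) / ((1 - fps_X) * (1 - 2 * fps_X) ^ 2)"
proof -
  let ?q = "(1 - fps_X) * (1 - 2 * fps_X) ^ 2 :: rat fps"
  have q: "?q = 1 - fps_const 5 * fps_X + fps_const 8 * fps_X ^ 2 - fps_const 4 * fps_X ^ 3"
    by (simp add: fps_numeral_fps_const[symmetric] algebra_simps power2_eq_square power3_eq_cube)
  have coeff: "fps_nth (Abs_fps a * ?q) n =
      a n - 5 * (if n < 1 then 0 else a (n - 1)) + 8 * (if n < 2 then 0 else a (n - 2))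
        - 4 * (if n < 3 then 0 else a (n - 3))" for n
  proof -
    have "Abs_fps a * ?q = Abs_fps a - fps_const 5 * (fps_X * Abs_fps a)
        + fps_const 8 * (fps_X ^ 2 * Abs_fps a) - fps_const 4 * (fps_X ^ 3 * Abs_fps a)"
      unfolding q by (simp add: algebra_simps)
    then show ?thesis
      by (simp only: fps_sub_nth fps_add_nth fps_mult_left_const_nth fps_X_power_mult_nth)
        (simp add: fps_X_mult_nth)
  qed
  have numer: "fps_nth (1 - 4 * fps_X + 5 * fps_X ^ 2 :: rat fps) n =
      (if n = 0 then 1 else if n = 1 then -4 else if n = 2 then 5 else 0)" for n
    by (simp add: fps_numeral_fps_const fps_X_power_nth fps_X_nth)
  text \<open>From index 4 on the coefficients vanish: the closed form satisfies
    a(n) = 5 a(n-1) - 8 a(n-2) + 4 a(n-3), whose characteristic polynomial is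
    (t - 1)(t - 2)^2.\<close>
  have "Abs_fps a * ?q = 1 - 4 * fps_X + 5 * fps_X ^ 2"
  proof (rule fps_ext)
    fix n
    show "fps_nth (Abs_fps a * ?q) n = fps_nth (1 - 4 * fps_X + 5 * fps_X ^ 2) n"
    proof (cases "n < 4")
      case True
      then consider "n = 0" | "n = 1" | "n = 2" | "n = 3" by linarith
      then show ?thesis
        unfolding coeff numer by cases (simp_all add: a0 a)
    next
      case False
      then obtain k where k: "n = k + 4" by (metis add.commute le_Suc_ex not_less)
      show ?thesis
        unfolding coeff numer k by (simp add: a numeral_eq_Suc algebra_simps)
    qed
  qed
  moreover have "fps_nth ?q 0 \<noteq> 0"
    unfolding q by simp
  then have "?q \<noteq> 0" by (rule fps_nonzeroI)
  ultimately show ?thesis by (metis fps_divide_times_eq)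
qed

definition des_asc_free :: "'a::linorder list \<Rightarrow> bool" where
  "des_asc_free xs \<longleftrightarrow> \<not> (\<exists>i j k l. i < j \<and> j < k \<and> k < l \<and> l < length xs \<and>
      xs ! j < xs ! i \<and> xs ! k < xs ! l)"

lemma not_des_asc_freeI:
  assumes "i < j" "j < k" "k < l" "l < length xs" "xs ! j < xs ! i" "xs ! k < xs ! l"
  shows "\<not> des_asc_free xs"
  using assms unfolding des_asc_free_def by blast

lemma not_des_asc_freeE:
  assumes "\<not> des_asc_free xs"
  obtains i j k l where "i < j" "j < k" "k < l" "l < length xs" "xs ! j < xs ! i" "xs ! k < xs ! l"
  using assms unfolding des_asc_free_def by blast

lemma des_asc_free_appendD1: "des_asc_free (xs @ ys) \<Longrightarrow> des_asc_free xs"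
proof (erule contrapos_pp)
  assume "\<not> des_asc_free xs"
  then obtain i j k l where "i < j" "j < k" "k < l" "l < length xs" "xs ! j < xs ! i" "xs ! k < xs ! l"
    by (rule not_des_asc_freeE)
  then show "\<not> des_asc_free (xs @ ys)"
    by (intro not_des_asc_freeI[of i j k l]) (simp_all add: nth_append)
qed

lemma des_asc_free_appendD2: "des_asc_free (xs @ ys) \<Longrightarrow> des_asc_free ys"
proof (erule contrapos_pp)
  assume "\<not> des_asc_free ys"
  then obtain i j k l where "i < j" "j < k" "k < l" "l < length ys" "ys ! j < ys ! i" "ys ! k < ys ! l"
    by (rule not_des_asc_freeE)
  then show "\<not> des_asc_free (xs @ ys)"
    by (intro not_des_asc_freeI[of "length xs + i" "length xs + j" "length xs + k" "length xs + l"])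
      simp_all
qed

lemma des_asc_free_Cons_below:
  assumes "\<forall>y\<in>set xs. x < y"
  shows "des_asc_free (x # xs) \<longleftrightarrow> des_asc_free xs"
proof
  assume "des_asc_free (x # xs)"
  then show "des_asc_free xs" using des_asc_free_appendD2[of "[x]" xs] by simp
next
  assume free: "des_asc_free xs"
  show "des_asc_free (x # xs)"
  proof (rule ccontr)
    assume "\<not> des_asc_free (x # xs)"
    then obtain i j k l where idx: "i < j" "j < k" "k < l" "l < length (x # xs)"
      and vals: "(x # xs) ! j < (x # xs) ! i" "(x # xs) ! k < (x # xs) ! l"
      by (rule not_des_asc_freeE)
    show False
    proof (cases i)
      case 0
      have "xs ! (j - 1) \<in> set xs" using idx by simp
      moreover have "xs ! (j - 1) < x" using vals idx 0 by (simp add: nth_Cons')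
      ultimately show False using assms by auto
    next
      case (Suc i')
      have "\<not> des_asc_free xs"
        by (rule not_des_asc_freeI[of i' "j - 1" "k - 1" "l - 1"])
          (use idx vals Suc in \<open>simp_all add: nth_Cons'\<close>)
      with free show False by contradiction
    qed
  qed
qed

lemma des_asc_free_snoc_below:
  assumes "\<forall>y\<in>set xs. x < y"
  shows "des_asc_free (xs @ [x]) \<longleftrightarrow> des_asc_free xs"
proof
  assume "des_asc_free (xs @ [x])"
  then show "des_asc_free xs" by (rule des_asc_free_appendD1)
next
  assume free: "des_asc_free xs"
  show "des_asc_free (xs @ [x])"
  proof (rule ccontr)
    assume "\<not> des_asc_free (xs @ [x])"
    then obtain i j k l where idx: "i < j" "j < k" "k < l" "l < length (xs @ [x])"
      and vals: "(xs @ [x]) ! j < (xs @ [x]) ! i" "(xs @ [x]) ! k < (xs @ [x]) ! l"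
      by (rule not_des_asc_freeE)
    show False
    proof (cases "l = length xs")
      case True
      have "xs ! k \<in> set xs" using idx True by simp
      moreover have "xs ! k < x" using vals idx True by (simp add: nth_append)
      ultimately show False using assms by auto
    next
      case False
      have "\<not> des_asc_free xs"
        by (rule not_des_asc_freeI[of i j k l]) (use idx vals False in \<open>simp_all add: nth_append\<close>)
      with free show False by contradiction
    qed
  qed
qed

lemma des_asc_free_valley:
  assumes "sorted_wrt (<) ys" "sorted_wrt (>) zs"
  shows "des_asc_free (ys @ x # zs)"
proof (rule ccontr)
  let ?xs = "ys @ x # zs"
  assume "\<not> des_asc_free ?xs"
  then obtain i j k l where idx: "i < j" "j < k" "k < l" "l < length ?xs"
    and vals: "?xs ! j < ?xs ! i" "?xs ! k < ?xs ! l"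
    by (rule not_des_asc_freeE)
  show False
  proof (cases "j < length ys")
    case True
    then have "ys ! j < ys ! i" using vals idx by (simp add: nth_append)
    moreover have "ys ! i < ys ! j" using assms(1) idx True by (simp add: sorted_wrt_iff_nth_less)
    ultimately show False by simp
  next
    case False
    let ?k = "k - Suc (length ys)" and ?l = "l - Suc (length ys)"
    have "zs ! ?k < zs ! ?l" using vals idx False by (simp add: nth_append)
    moreover have "zs ! ?l < zs ! ?k" using assms(2) idx False by (simp add: sorted_wrt_iff_nth_less)
    ultimately show False by simp
  qed
qed

lemma des_asc_free_valleyD:
  assumes free: "des_asc_free (ys @ x # zs)" and "distinct (ys @ x # zs)"
    and "ys \<noteq> []" "zs \<noteq> []" "\<forall>y\<in>set ys \<union> set zs. x < y"
  shows "sorted_wrt (<) ys \<and> sorted_wrt (>) zs"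
proof -
  let ?xs = "ys @ x # zs"
  have "ys ! i < ys ! j" if "i < j" "j < length ys" for i j
  proof (rule ccontr)
    assume "\<not> ys ! i < ys ! j"
    moreover have "ys ! i \<noteq> ys ! j" using assms(2) that by (simp add: nth_eq_iff_index_eq)
    ultimately have "ys ! j < ys ! i" by simp
    moreover have "x < zs ! 0" using assms(4,5) by simp
    ultimately have "\<not> des_asc_free ?xs"
      using that assms(4) by (intro not_des_asc_freeI[of i j "length ys" "Suc (length ys)"])
        (simp_all add: nth_append)
    with free show False by contradiction
  qed
  moreover have "zs ! j < zs ! i" if "i < j" "j < length zs" for i j
  proof (rule ccontr)
    assume "\<not> zs ! j < zs ! i"
    moreover have "zs ! i \<noteq> zs ! j" using assms(2) that by (simp add: nth_eq_iff_index_eq)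
    ultimately have "zs ! i < zs ! j" by simp
    moreover have "x < ys ! 0" using assms(3,5) by simp
    ultimately have "\<not> des_asc_free ?xs"
      using that assms(3)
      by (intro not_des_asc_freeI[of 0 "length ys" "Suc (length ys + i)" "Suc (length ys + j)"])
        (simp_all add: nth_append)
    with free show False by contradiction
  qed
  ultimately show ?thesis by (simp add: sorted_wrt_iff_nth_less)
qed

definition avoiders :: "'a::linorder set \<Rightarrow> 'a list set" where
  "avoiders S = {xs. distinct xs \<and> set xs = S \<and> des_asc_free xs}"

definition valley :: "'a::linorder \<Rightarrow> 'a set \<Rightarrow> 'a set \<Rightarrow> 'a list" where
  "valley x T U = sorted_list_of_set T @ x # rev (sorted_list_of_set U)"

lemma finite_avoiders: "finite S \<Longrightarrow> finite (avoiders S)"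
  by (rule finite_subset[OF _ finite_subset_distinct[of S]]) (auto simp: avoiders_def)

lemma avoiders_empty: "avoiders {} = {[]}"
  by (auto simp: avoiders_def des_asc_free_def)

lemma avoiders_singleton: "avoiders {x} = {[x]}"
proof -
  have "xs = [x]" if "distinct xs" "set xs = {x}" for xs :: "'a list"
  proof -
    have "length xs = 1" using distinct_card[OF that(1)] that(2) by simp
    then obtain y where "xs = [y]" by (auto simp: length_Suc_conv)
    with that(2) show ?thesis by simp
  qed
  then show ?thesis by (auto simp: avoiders_def des_asc_free_def)
qed

lemma Cons_in_avoiders_insert_iff:
  assumes "\<forall>y\<in>S. m < y"
  shows "m # xs \<in> avoiders (insert m S) \<longleftrightarrow> xs \<in> avoiders S"
proof -
  have "m \<notin> S" using assms by blast
  then have "distinct (m # xs) \<and> set (m # xs) = insert m S \<longleftrightarrow> distinct xs \<and> set xs = S"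
    by auto
  moreover have "set xs = S \<Longrightarrow> des_asc_free (m # xs) \<longleftrightarrow> des_asc_free xs"
    using assms by (simp add: des_asc_free_Cons_below)
  ultimately show ?thesis unfolding avoiders_def by blast
qed

lemma snoc_in_avoiders_insert_iff:
  assumes "\<forall>y\<in>S. m < y"
  shows "xs @ [m] \<in> avoiders (insert m S) \<longleftrightarrow> xs \<in> avoiders S"
proof -
  have "m \<notin> S" using assms by blast
  then have "distinct (xs @ [m]) \<and> set (xs @ [m]) = insert m S \<longleftrightarrow> distinct xs \<and> set xs = S"
    by auto
  moreover have "set xs = S \<Longrightarrow> des_asc_free (xs @ [m]) \<longleftrightarrow> des_asc_free xs"
    using assms by (simp add: des_asc_free_snoc_below)
  ultimately show ?thesis unfolding avoiders_def by blast
qed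

lemma valley_in_avoiders_insert:
  assumes "finite S" "\<forall>y\<in>S. m < y" "T \<subseteq> S"
  shows "valley m T (S - T) \<in> avoiders (insert m S)"
proof -
  have "finite T" using assms(1,3) by (rule rev_finite_subset)
  moreover have "m \<notin> S" using assms(2) by blast
  ultimately show ?thesis
    using assms by (auto simp: avoiders_def valley_def sorted_wrt_rev intro: des_asc_free_valley)
qed

lemma sorted_list_of_set_strict_sorted: "sorted_wrt (<) xs \<Longrightarrow> sorted_list_of_set (set xs) = xs"
  by (simp add: sorted_list_of_set_sort_remdups strict_sorted_iff distinct_remdups_id sorted_sort_id)

lemma set_takeWhile_valley:
  "finite T \<Longrightarrow> x \<notin> T \<Longrightarrow> set (takeWhile (\<lambda>y. y \<noteq> x) (valley x T U)) = T"
  unfolding valley_def by (subst takeWhile_append2) auto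

lemma avoiders_insert_cases:
  assumes "\<forall>y\<in>S. m < y" "xs \<in> avoiders (insert m S)"
  obtains (first) ys where "ys \<in> avoiders S" "xs = m # ys"
    | (last) ys where "ys \<in> avoiders S" "xs = ys @ [m]"
    | (valley) T where "T \<subseteq> S" "T \<noteq> {}" "T \<noteq> S" "xs = valley m T (S - T)"
proof -
  have dist: "distinct xs" and set_xs: "set xs = insert m S" and free: "des_asc_free xs"
    using assms(2) by (auto simp: avoiders_def)
  obtain ys zs where xs: "xs = ys @ m # zs"
    using set_xs split_list[of m xs] by auto
  have "m \<notin> S" using assms(1) by blast
  then have S: "S = set ys \<union> set zs" and disj: "set ys \<inter> set zs = {}"
    using dist set_xs unfolding xs by auto
  consider "ys = []" | "zs = []" | "ys \<noteq> []" "zs \<noteq> []" by blast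
  then show thesis
  proof cases
    case 1
    then have "zs \<in> avoiders S"
      using dist free xs S Cons_in_avoiders_insert_iff[OF assms(1)] assms(2) by simp
    with 1 xs first show thesis by simp
  next
    case 2
    then have "ys \<in> avoiders S"
      using dist free xs S snoc_in_avoiders_insert_iff[OF assms(1)] assms(2) by simp
    with 2 xs last show thesis by simp
  next
    case 3
    then have "sorted_wrt (<) ys" "sorted_wrt (>) zs"
      using des_asc_free_valleyD[of ys m zs] free dist assms(1) S unfolding xs by auto
    then have "sorted_list_of_set (set ys) = ys" "sorted_list_of_set (set zs) = rev zs"
      using sorted_list_of_set_strict_sorted[of "rev zs"]
      by (simp_all add: sorted_list_of_set_strict_sorted sorted_wrt_rev)
    moreover have "S - set ys = set zs" using S disj by blast
    ultimately have "xs = valley m (set ys) (S - set ys)" by (simp add: valley_def xs)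
    moreover have "set ys \<noteq> S" using S disj \<open>zs \<noteq> []\<close> by (metis Un_Int_eq(2) set_empty)
    ultimately show thesis using 3 S valley by blast
  qed
qed

lemma card_avoiders_insert_below:
  assumes "finite S" "S \<noteq> {}" "\<forall>y\<in>S. m < y"
  shows "card (avoiders (insert m S)) = 2 * card (avoiders S) + (2 ^ card S - 2)"
proof -
  let ?P = "Pow S - {{}, S}"
  let ?F = "Cons m ` avoiders S" and ?L = "(\<lambda>ys. ys @ [m]) ` avoiders S"
    and ?V = "(\<lambda>T. valley m T (S - T)) ` ?P"
  have m: "m \<notin> S" using assms(3) by blast
  have split: "avoiders (insert m S) = ?F \<union> ?L \<union> ?V"
  proof (intro equalityI subsetI)
    fix xs assume "xs \<in> avoiders (insert m S)"
    then show "xs \<in> ?F \<union> ?L \<union> ?V"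
      by (rule avoiders_insert_cases[OF assms(3)]) auto
  next
    fix xs assume "xs \<in> ?F \<union> ?L \<union> ?V"
    then show "xs \<in> avoiders (insert m S)"
      using Cons_in_avoiders_insert_iff[OF assms(3)] snoc_in_avoiders_insert_iff[OF assms(3)]
        valley_in_avoiders_insert[OF assms(1,3)] by auto
  qed
  have F: "?F \<subseteq> {xs. hd xs = m}" by auto
  have L: "?L \<subseteq> {xs. hd xs \<noteq> m \<and> last xs = m}"
  proof
    fix xs assume "xs \<in> ?L"
    then obtain ys where ys: "ys \<in> avoiders S" "xs = ys @ [m]" by blast
    then have "set ys = S" by (simp add: avoiders_def)
    moreover from this have "ys \<noteq> []" using assms(2) by auto
    ultimately have "hd ys \<in> S" by auto
    then show "xs \<in> {xs. hd xs \<noteq> m \<and> last xs = m}" using ys(2) \<open>ys \<noteq> []\<close> m by auto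
  qed
  have V: "?V \<subseteq> {xs. hd xs \<noteq> m \<and> last xs \<noteq> m}"
  proof
    fix xs assume "xs \<in> ?V"
    then obtain T where T: "T \<in> ?P" "xs = valley m T (S - T)" by blast
    let ?ys = "sorted_list_of_set T" and ?zs = "sorted_list_of_set (S - T)"
    have "finite T" "finite (S - T)" using assms(1) T by (auto intro: rev_finite_subset)
    then have "set ?ys = T" "set ?zs = S - T" "?ys \<noteq> []" "?zs \<noteq> []" using T by auto
    moreover have "hd xs = hd ?ys" "last xs = hd ?zs"
      using \<open>?ys \<noteq> []\<close> \<open>?zs \<noteq> []\<close> by (simp_all add: T(2) valley_def last_rev)
    ultimately have "hd xs \<in> T" "last xs \<in> S - T" by (metis hd_in_set)+
    then show "xs \<in> {xs. hd xs \<noteq> m \<and> last xs \<noteq> m}" using T m by auto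
  qed
  have "inj_on (\<lambda>T. valley m T (S - T)) ?P"
  proof (rule inj_onI)
    fix T T' assume T: "T \<in> ?P" and T': "T' \<in> ?P"
      and eq: "valley m T (S - T) = valley m T' (S - T')"
    have "finite T" "finite T'" using assms(1) T T' by (auto intro: rev_finite_subset)
    moreover have "m \<notin> T" "m \<notin> T'" using T T' m by auto
    ultimately show "T = T'"
      using eq by (metis set_takeWhile_valley)
  qed
  then have "card ?V = card ?P" by (rule card_image)
  also have "\<dots> = 2 ^ card S - 2"
    using assms(1,2) by (simp add: card_Diff_subset card_Pow)
  finally have card_V: "card ?V = 2 ^ card S - 2" .
  have "card ?F = card (avoiders S)" "card ?L = card (avoiders S)"
    by (simp_all add: card_image inj_on_def)
  moreover have "finite ?F" "finite ?L" "finite ?V"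
    using assms(1) by (simp_all add: finite_avoiders)
  moreover have "?F \<inter> ?L = {}" "(?F \<union> ?L) \<inter> ?V = {}"
    using F L V by blast+
  ultimately show ?thesis
    unfolding split by (simp add: card_Un_disjoint card_V)
qed

lemma card_avoiders:
  assumes "finite S" "S \<noteq> {}"
  shows "int (card (avoiders S)) = (int (card S) - 2) * 2 ^ (card S - 1) + 2"
  using assms
proof (induction S rule: finite_linorder_min_induct)
  case empty
  then show ?case by simp
next
  case (insert m S)
  show ?case
  proof (cases "S = {}")
    case True
    then show ?thesis by (simp add: avoiders_singleton)
  next
    case False
    then obtain n where n: "card S = Suc n"
      using insert.hyps(1) by (metis card_gt_0_iff gr0_implies_Suc)
    have "(2::nat) \<le> 2 ^ card S" using n by simp
    then have "int (card (avoiders (insert m S))) = 2 * int (card (avoiders S)) + 2 ^ card S - 2"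
      using card_avoiders_insert_below[OF insert.hyps(1) False insert.hyps(2)] by simp
    moreover have "m \<notin> S" using insert.hyps(2) by blast
    then have "card (insert m S) = Suc (card S)" using insert.hyps(1) by simp
    ultimately show ?thesis
      using insert.IH[OF False] n by (simp add: algebra_simps)
  qed
qed

lemma avoids_pop_p_iff_des_asc_free: "avoids_pop 4 pop_p xs \<longleftrightarrow> des_asc_free xs"
proof -
  have labels: "{1..4::nat} = {1, 2, 3, 4}" by auto
  have "contains_pop 4 pop_p xs \<longleftrightarrow>
        (\<exists>f :: nat \<Rightarrow> nat. f 1 < f 2 \<and> f 2 < f 3 \<and> f 3 < f 4 \<and> f 4 < length xs \<and>
             xs ! f 2 < xs ! f 1 \<and> xs ! f 3 < xs ! f 4)"
    unfolding contains_pop_def pop_p_def labels by (auto 0 3 intro!: ex_cong)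
  also have "\<dots> \<longleftrightarrow> \<not> des_asc_free xs"
  proof
    assume "\<not> des_asc_free xs"
    then obtain i j k l where "i < j" "j < k" "k < l" "l < length xs" "xs ! j < xs ! i" "xs ! k < xs ! l"
      by (rule not_des_asc_freeE)
    then show "\<exists>f :: nat \<Rightarrow> nat. f 1 < f 2 \<and> f 2 < f 3 \<and> f 3 < f 4 \<and> f 4 < length xs \<and>
             xs ! f 2 < xs ! f 1 \<and> xs ! f 3 < xs ! f 4"
      by (intro exI[of _ "(\<lambda>_. l)(1 := i, 2 := j, 3 := k)"]) simp
  qed (metis not_des_asc_freeI)
  finally show ?thesis by (simp add: avoids_pop_def)
qed

lemma all_less_4_iff: "(\<forall>a < (4::nat). P a) \<longleftrightarrow> P 0 \<and> P 1 \<and> P 2 \<and> P 3"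
  by (auto simp: numeral_eq_Suc less_Suc_eq)

lemma descent_ascent_order_type:
  fixes v1 v2 v3 v4 :: "'a::linorder"
  assumes "v2 < v1" "v3 < v4" "v1 \<noteq> v3" "v1 \<noteq> v4" "v2 \<noteq> v3" "v2 \<noteq> v4"
  shows "\<exists>q\<in>{[2,1,3,4], [3,1,2,4], [4,1,2,3], [3,2,1,4], [4,2,1,3], [4,3,1,2::nat]}.
     \<forall>a<4. \<forall>b<4. q ! a < q ! b \<longleftrightarrow> [v1, v2, v3, v4] ! a < [v1, v2, v3, v4] ! b"
proof -
  consider "v1 < v3" | "v3 < v1" "v1 < v4" "v2 < v3" | "v3 < v1" "v1 < v4" "v3 < v2"
    | "v4 < v1" "v2 < v3" | "v4 < v1" "v3 < v2" "v2 < v4" | "v4 < v2"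
    using assms by (metis neq_iff)
  then show ?thesis
  proof cases
    case 1 show ?thesis by (rule bexI[of _ "[2,1,3,4]"]) (use 1 assms in \<open>auto simp: all_less_4_iff\<close>)
  next
    case 2 show ?thesis by (rule bexI[of _ "[3,1,2,4]"]) (use 2 assms in \<open>auto simp: all_less_4_iff\<close>)
  next
    case 3 show ?thesis by (rule bexI[of _ "[3,2,1,4]"]) (use 3 assms in \<open>auto simp: all_less_4_iff\<close>)
  next
    case 4 show ?thesis by (rule bexI[of _ "[4,1,2,3]"]) (use 4 assms in \<open>auto simp: all_less_4_iff\<close>)
  next
    case 5 show ?thesis by (rule bexI[of _ "[4,2,1,3]"]) (use 5 assms in \<open>auto simp: all_less_4_iff\<close>)
  next
    case 6 show ?thesis by (rule bexI[of _ "[4,3,1,2]"]) (use 6 assms in \<open>auto simp: all_less_4_iff\<close>)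
  qed
qed

lemma des_asc_free_iff_avoids_classical:
  assumes "distinct xs"
  shows "des_asc_free xs \<longleftrightarrow>
    (\<forall>q\<in>{[2,1,3,4], [3,1,2,4], [4,1,2,3], [3,2,1,4], [4,2,1,3], [4,3,1,2]}. avoids_classical q xs)"
proof
  assume free: "des_asc_free xs"
  show "\<forall>q\<in>{[2,1,3,4], [3,1,2,4], [4,1,2,3], [3,2,1,4], [4,2,1,3], [4,3,1,2]}. avoids_classical q xs"
  proof (intro ballI, unfold avoids_classical_def, rule notI)
    fix q :: "nat list"
    assume "q \<in> {[2,1,3,4], [3,1,2,4], [4,1,2,3], [3,2,1,4], [4,2,1,3], [4,3,1,2]}"
    then have q: "length q = 4" "q ! 1 < q ! 0" "q ! 2 < q ! 3" by auto
    assume "contains_classical q xs"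
    then obtain f where mono: "\<forall>a<4. \<forall>b<4. a < b \<longrightarrow> f a < f b" and bound: "\<forall>a<4. f a < length xs"
      and iso: "\<forall>a<4. \<forall>b<4. q ! a < q ! b \<longleftrightarrow> xs ! f a < xs ! f b"
      unfolding contains_classical_def q(1) by blast
    have "f 0 < f 1" "f 1 < f 2" "f 2 < f 3" "f 3 < length xs"
      using mono bound by (simp_all add: all_less_4_iff)
    moreover have "xs ! f 1 < xs ! f 0" "xs ! f 2 < xs ! f 3"
      using iso q by (simp_all add: all_less_4_iff)
    ultimately have "\<not> des_asc_free xs"
      by (rule not_des_asc_freeI)
    with free show False by contradiction
  qed
next
  assume avoid: "\<forall>q\<in>{[2,1,3,4], [3,1,2,4], [4,1,2,3], [3,2,1,4], [4,2,1,3], [4,3,1,2]}.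
    avoids_classical q xs"
  show "des_asc_free xs"
  proof (rule ccontr)
    assume "\<not> des_asc_free xs"
    then obtain i j k l where idx: "i < j" "j < k" "k < l" "l < length xs"
      and vals: "xs ! j < xs ! i" "xs ! k < xs ! l"
      by (rule not_des_asc_freeE)
    let ?vs = "[xs ! i, xs ! j, xs ! k, xs ! l]"
    have "xs ! i \<noteq> xs ! k" "xs ! i \<noteq> xs ! l" "xs ! j \<noteq> xs ! k" "xs ! j \<noteq> xs ! l"
      using idx assms by (simp_all add: nth_eq_iff_index_eq)
    then obtain q :: "nat list" where q: "q \<in> {[2,1,3,4], [3,1,2,4], [4,1,2,3], [3,2,1,4], [4,2,1,3], [4,3,1,2]}"
      and iso: "\<forall>a<4. \<forall>b<4. q ! a < q ! b \<longleftrightarrow> ?vs ! a < ?vs ! b"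
      using descent_ascent_order_type[OF vals] by blast
    define f where "f = (\<lambda>a::nat. [i, j, k, l] ! a)"
    have "length q = 4" using q by auto
    moreover have "\<forall>a<4. \<forall>b<4. a < b \<longrightarrow> f a < f b" "\<forall>a<4. f a < length xs"
      using idx by (simp_all add: f_def all_less_4_iff)
    moreover have "\<forall>a<4. xs ! f a = ?vs ! a"
      by (simp add: f_def all_less_4_iff)
    ultimately have "contains_classical q xs"
      unfolding contains_classical_def using iso by (intro exI[of _ f]) simp
    with q avoid show False by (auto simp: avoids_classical_def)
  qed
qed

lemma a_seq_eq_card_avoiders: "a_seq n = card (avoiders {1..n})"
  unfolding a_seq_def avoiders_def perms_def by (simp add: avoids_pop_p_iff_des_asc_free conj_assoc)

lemma a_seq_0: "a_seq 0 = 1"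
  by (simp add: a_seq_eq_card_avoiders avoiders_empty)

lemma a_seq_closed_form:
  assumes "n \<ge> 1"
  shows "of_nat (a_seq n) = (of_nat n - 2) * 2 ^ (n - 1) + (2 :: 'a::ring_1)"
proof -
  have "int (a_seq n) = (int n - 2) * 2 ^ (n - 1) + 2"
    using card_avoiders[of "{1..n}"] assms by (simp add: a_seq_eq_card_avoiders)
  then have "of_int (int (a_seq n)) = (of_int ((int n - 2) * 2 ^ (n - 1) + 2) :: 'a)"
    by (rule arg_cong)
  then show ?thesis by simp
qed

lemma a_seq_recurrence: "n \<ge> 1 \<Longrightarrow> int (a_seq n) = 2 * int (a_seq (n - 1)) + 2 ^ (n - 1) - 2"
proof (cases "n = 1")
  case True
  then show ?thesis by (simp add: a_seq_0 a_seq_closed_form)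
next
  case False
  moreover assume "n \<ge> 1"
  ultimately obtain k where "n = k + 2" by (intro that[of "n - 2"]) simp
  then show ?thesis by (simp add: a_seq_closed_form algebra_simps)
qed

theorem theorem3p5:
  shows "(\<forall>n. \<forall>\<pi>\<in>perms n. avoids_pop 4 pop_p \<pi> \<longleftrightarrow>
            (\<forall>q\<in>{[2,1,3,4], [3,1,2,4], [4,1,2,3], [3,2,1,4], [4,2,1,3], [4,3,1,2]}.
               avoids_classical q \<pi>))
    \<and> a_seq 0 = 1
    \<and> (\<forall>n\<ge>1. int (a_seq n) = 2 * int (a_seq (n - 1)) + 2 ^ (n - 1) - 2)
    \<and> (\<forall>n\<ge>1. int (a_seq n) = (int n - 2) * 2 ^ (n - 1) + 2)
    \<and> Abs_fps (\<lambda>n. of_nat (a_seq n) :: rat)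
        = (1 - 4 * fps_X + 5 * fps_X ^ 2) / ((1 - fps_X) * (1 - 2 * fps_X) ^ 2)"
proof -
  have "\<forall>n. \<forall>\<pi>\<in>perms n. avoids_pop 4 pop_p \<pi> \<longleftrightarrow>
            (\<forall>q\<in>{[2,1,3,4], [3,1,2,4], [4,1,2,3], [3,2,1,4], [4,2,1,3], [4,3,1,2]}.
               avoids_classical q \<pi>)"
    by (simp add: perms_def avoids_pop_p_iff_des_asc_free des_asc_free_iff_avoids_classical)
  moreover have "Abs_fps (\<lambda>n. of_nat (a_seq n) :: rat)
        = (1 - 4 * fps_X + 5 * fps_X ^ 2) / ((1 - fps_X) * (1 - 2 * fps_X) ^ 2)"
    by (rule fps_closed_form) (simp_all add: a_seq_0 a_seq_closed_form)
  ultimately show ?thesis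
    using a_seq_0 a_seq_recurrence a_seq_closed_form by blast
qed

end
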